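(* Let $s_1\ge 1$ and $s_2\ge 0$ be integers, and for integers $N$ let $$f_{s_1,s_2}(N)=\binom{s_2}{N}\sum_{i}\binom{s_1}{i}\binom{s_1}{N-i}\binom{N}{i}.$$ Then there is an integer $g(s_1,s_2)$ such that $f_{s_1,s_2}(N)$ is a non-decreasing function of $N$ for integers $N\le g(s_1,s_2)$ and a non-increasing function of $N$ for integers $N\ge g(s_1,s_2)$. Moreover, $$g(s_1,s_2)=\left\lfloor 2s_1+s_2+\tfrac32-\sqrt{4s_1^2+4s_1+(s_2+\tfrac12)^2}\right\rfloor+\delta$$ with $\delta\in\{0,1\}$.
   Context: Binomial coefficients $\binom{a}{b}$ are taken to be $0$ when $b<0$ or $b>a$; the sum is over all integers $i$. If $f_{s_1,s_2}$ attains equal maxima at two consecutive integers $N$ and $N+1$, either may be taken as $g(s_1,s_2)$. $\lfloor\cdot\rfloor$ denotes the integer part. *)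

theory Defs
  imports Complex_Main
begin

definition ibinom :: "int \<Rightarrow> int \<Rightarrow> int" where
  "ibinom a b = (if 0 \<le> b \<and> b \<le> a then int (nat a choose nat b) else 0)"

text \<open>f_{s1,s2}(N). The sum over all integers i is written over {0..s1}:
  every term with i outside this range vanishes since ibinom s1 i = 0 there.\<close>
definition f12 :: "int \<Rightarrow> int \<Rightarrow> int \<Rightarrow> int" where
  "f12 s1 s2 N = ibinom s2 N * (\<Sum>i\<in>{0..s1}. ibinom s1 i * ibinom s1 (N - i) * ibinom N i)"

end

theory Submission
  imports Defs
begin

text \<open>
  With \<open>P(x) = \<Sum>\<^sub>i C(s\<^sub>1,i) x\<^sup>i / i!\<close>, the inner sum of \<open>f(N)\<close> is \<open>N!\<close> times the coefficient
  \<open>b\<^sub>N\<close> of \<open>x\<^sup>N\<close> in \<open>P(x)\<^sup>2\<close>, so \<open>f(N) = s\<^sub>2(s\<^sub>2-1)\<cdots>(s\<^sub>2-N+1) b\<^sub>N\<close> and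
  \<open>f(N+1)/f(N) = (s\<^sub>2-N) b\<^sub>N\<^sub>+\<^sub>1/b\<^sub>N\<close>. The recursion \<open>(i+1)\<^sup>2 c\<^sub>i\<^sub>+\<^sub>1 = (s\<^sub>1-i) c\<^sub>i\<close> for the
  coefficients of \<open>P\<close> yields a three-term recurrence for \<open>b\<^sub>N\<close>, and from it the ratio bounds
  \<open>2(2s\<^sub>1-N)/(N\<^sup>2+N+2s\<^sub>1) \<le> b\<^sub>N\<^sub>+\<^sub>1/b\<^sub>N \<le> 2(2s\<^sub>1-N)/(N+1)\<^sup>2\<close>: the two defects satisfy a
  coupled recursion whose only sign-changing coefficient is concave in \<open>N\<close>, so their
  nonnegativity propagates upwards from \<open>N = 0\<close> while that coefficient is nonnegative and
  downwards from \<open>N = 2s\<^sub>1+1\<close>, where \<open>b\<^sub>N\<close> vanishes, once it is negative. Comparing the bounds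
  with \<open>s\<^sub>2-N\<close> places the sign change of \<open>f(N+1) - f(N)\<close> within one step of the root of a
  quadratic, which is the floor expression.
\<close>

lemma of_nat_Suc_mult_choose_Suc:
  "real (Suc k) * real (n choose Suc k) = (real n - real k) * real (n choose k)"
proof -
  have "real (Suc k) * real (n choose Suc k) = real n * ((real n - 1) gchoose k)"
    by (simp add: binomial_gbinomial gbinomial_absorption del: of_nat_Suc)
  also have "\<dots> = (real n - real k) * real (n choose k)"
    by (simp add: binomial_gbinomial gbinomial_absorb_comp)
  finally show ?thesis .
qed

lemma choose_Suc_mult_fact:
  "real (m choose Suc n) * fact (Suc n) = (real m - real n) * (real (m choose n) * fact n)"
proof -
  have "real (m choose Suc n) * fact (Suc n) = (real (Suc n) * real (m choose Suc n)) * fact n"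
    by (simp only: fact_Suc of_nat_mult mult_ac)
  then show ?thesis by (simp only: of_nat_Suc_mult_choose_Suc mult.assoc)
qed

lemma int_mono_upto_of_steps:
  fixes f :: "int \<Rightarrow> 'a::preorder"
  assumes "\<And>N. N + 1 \<le> g \<Longrightarrow> f N \<le> f (N + 1)" "N \<le> M" "M \<le> g"
  shows "f N \<le> f M"
  using assms(2,3) by (induction M rule: int_ge_induct) (auto intro: order_trans assms(1))

lemma int_antimono_from_of_steps:
  fixes f :: "int \<Rightarrow> 'a::preorder"
  assumes "\<And>N. g \<le> N \<Longrightarrow> f (N + 1) \<le> f N" "g \<le> N" "N \<le> M"
  shows "f M \<le> f N"
  using assms(3)
proof (induction M rule: int_ge_induct)
  case (step i)
  then show ?case using assms(1)[of i] assms(2) order_trans by auto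
qed simp

lemma unimodal_of_steps:
  fixes f :: "int \<Rightarrow> 'a::linorder"
  assumes up: "\<And>N. N + 1 \<le> F \<Longrightarrow> f N \<le> f (N + 1)"
    and down: "\<And>N. F + 1 \<le> N \<Longrightarrow> f (N + 1) \<le> f N"
  shows "\<exists>g\<in>{F, F + 1}. (\<forall>N M. N \<le> M \<and> M \<le> g \<longrightarrow> f N \<le> f M) \<and>
           (\<forall>N M. g \<le> N \<and> N \<le> M \<longrightarrow> f M \<le> f N)"
proof (cases "f (F + 1) \<le> f F")
  case True
  then have "f (N + 1) \<le> f N" if "F \<le> N" for N
    using down that by (cases "N = F") auto
  then show ?thesis
    using int_mono_upto_of_steps[of F f] int_antimono_from_of_steps[of F f] up by blast
next
  case False
  then have "f N \<le> f (N + 1)" if "N + 1 \<le> F + 1" for N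
    using up that by (cases "N = F") auto
  then show ?thesis
    using int_mono_upto_of_steps[of "F + 1" f] int_antimono_from_of_steps[of "F + 1" f] down by blast
qed

text \<open>\<open>expbin s i\<close> and \<open>expbin_sq s n\<close> are the coefficients of \<open>x\<^sup>i\<close> in \<open>P(x)\<close> and of \<open>x\<^sup>n\<close> in \<open>P(x)\<^sup>2\<close>.\<close>

definition expbin :: "nat \<Rightarrow> nat \<Rightarrow> real" where
  "expbin s i = real (s choose i) / fact i"

definition expbin_sq :: "nat \<Rightarrow> nat \<Rightarrow> real" where
  "expbin_sq s n = (\<Sum>i\<le>n. expbin s i * expbin s (n - i))"

lemma expbin_Suc: "(real i + 1)^2 * expbin s (Suc i) = (real s - real i) * expbin s i"
proof -
  have "(real i + 1)^2 * expbin s (Suc i) = real (Suc i) * real (s choose Suc i) / fact i"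
    unfolding expbin_def fact_Suc by (simp add: power2_eq_square add.commute)
  also have "\<dots> = (real s - real i) * expbin s i"
    by (simp only: of_nat_Suc_mult_choose_Suc) (simp add: expbin_def)
  finally show ?thesis .
qed

lemma sum_atMost_reflect: "(\<Sum>i\<le>n. g i (n - i)) = (\<Sum>i\<le>(n::nat). g (n - i) i)"
  by (rule sum.reindex_bij_witness[where i="\<lambda>i. n - i" and j="\<lambda>i. n - i"]) auto

lemma sum_expbin_shift:
  "(\<Sum>i\<le>Suc n. (real i)^2 * w (i - 1) (Suc n - i) * expbin s i * expbin s (Suc n - i))
   = (\<Sum>i\<le>n. (real s - real i) * w i (n - i) * expbin s i * expbin s (n - i))"
proof -
  have shifted: "(real (Suc i))^2 * w i (n - i) * expbin s (Suc i) * expbin s (n - i)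
      = (real s - real i) * w i (n - i) * expbin s i * expbin s (n - i)" for i
    using expbin_Suc[of i s] by (simp add: add.commute mult_ac)
  show ?thesis
    by (subst sum.atMost_Suc_shift) (simp only: shifted diff_Suc_Suc diff_Suc_1 power_zero_numeral
          of_nat_0 mult_zero_left add_0)
qed

text \<open>The cross term produced by expanding \<open>(n+1)\<^sup>2 = (i + (n+1-i))\<^sup>2\<close> inside \<open>expbin_sq s (n+1)\<close>.\<close>

definition expbin_mix :: "nat \<Rightarrow> nat \<Rightarrow> real" where
  "expbin_mix s n = (\<Sum>i\<le>n. real i * real (n - i) * expbin s i * expbin s (n - i))"

lemma expbin_sq_Suc_eq:
  "(real n + 1)^2 * expbin_sq s (Suc n) = (2 * real s - real n) * expbin_sq s n + 2 * expbin_mix s (Suc n)"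
proof -
  let ?T = "\<lambda>m i. expbin s i * expbin s (m - i)"
  have shift: "(\<Sum>i\<le>Suc n. (real i)^2 * ?T (Suc n) i) = (\<Sum>i\<le>n. (real s - real i) * ?T n i)"
    using sum_expbin_shift[where w="\<lambda>_ _. 1"] by (simp add: mult.assoc)
  have reflect_Suc: "(\<Sum>i\<le>Suc n. (real (Suc n - i))^2 * ?T (Suc n) i) = (\<Sum>i\<le>Suc n. (real i)^2 * ?T (Suc n) i)"
    using sum_atMost_reflect[where g="\<lambda>i j. (real j)^2 * expbin s i * expbin s j" and n="Suc n"] by (simp add: mult_ac)
  have reflect: "(\<Sum>i\<le>n. (real s - real (n - i)) * ?T n i) = (\<Sum>i\<le>n. (real s - real i) * ?T n i)"
    using sum_atMost_reflect[where g="\<lambda>i j. (real s - real j) * expbin s i * expbin s j"] by (simp add: mult_ac)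
  have "(real n + 1)^2 * expbin_sq s (Suc n)
      = (\<Sum>i\<le>Suc n. (real i)^2 * ?T (Suc n) i) + (\<Sum>i\<le>Suc n. (real (Suc n - i))^2 * ?T (Suc n) i)
        + 2 * expbin_mix s (Suc n)"
    unfolding expbin_sq_def expbin_mix_def sum_distrib_left sum.distrib[symmetric]
    by (auto intro!: sum.cong simp: power2_eq_square algebra_simps)
  also have "\<dots> = (\<Sum>i\<le>n. (real s - real i) * ?T n i) + (\<Sum>i\<le>n. (real s - real (n - i)) * ?T n i)
        + 2 * expbin_mix s (Suc n)"
    by (simp only: reflect_Suc shift reflect)
  also have "\<dots> = (2 * real s - real n) * expbin_sq s n + 2 * expbin_mix s (Suc n)"
    unfolding expbin_sq_def sum_distrib_left sum.distrib[symmetric]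
    by (auto intro!: sum.cong simp: algebra_simps)
  finally show ?thesis .
qed

lemma expbin_mix_Suc_eq:
  "(real n + 1) * expbin_mix s (Suc n) = real s * real n * expbin_sq s n - 2 * expbin_mix s n"
proof -
  let ?T = "\<lambda>m i. expbin s i * expbin s (m - i)"
  have shift: "(\<Sum>i\<le>Suc n. (real i)^2 * real (Suc n - i) * ?T (Suc n) i)
      = (\<Sum>i\<le>n. (real s - real i) * real (n - i) * ?T n i)"
    using sum_expbin_shift[where w="\<lambda>_ j. real j"] by (simp add: mult.assoc)
  have reflect_Suc: "(\<Sum>i\<le>Suc n. real i * (real (Suc n - i))^2 * ?T (Suc n) i)
      = (\<Sum>i\<le>Suc n. (real i)^2 * real (Suc n - i) * ?T (Suc n) i)"
    using sum_atMost_reflect[where g="\<lambda>i j. real i * (real j)^2 * expbin s i * expbin s j" and n="Suc n"]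
    by (simp add: mult_ac)
  have reflect: "(\<Sum>i\<le>n. (real s - real (n - i)) * real i * ?T n i)
      = (\<Sum>i\<le>n. (real s - real i) * real (n - i) * ?T n i)"
    using sum_atMost_reflect[where g="\<lambda>i j. (real s - real j) * real i * expbin s i * expbin s j"]
    by (simp add: mult_ac)
  have "(real n + 1) * expbin_mix s (Suc n)
      = (\<Sum>i\<le>Suc n. (real i)^2 * real (Suc n - i) * ?T (Suc n) i)
        + (\<Sum>i\<le>Suc n. real i * (real (Suc n - i))^2 * ?T (Suc n) i)"
    unfolding expbin_mix_def sum_distrib_left sum.distrib[symmetric]
    by (auto intro!: sum.cong simp: power2_eq_square algebra_simps)
  also have "\<dots> = (\<Sum>i\<le>n. (real s - real i) * real (n - i) * ?T n i)
        + (\<Sum>i\<le>n. (real s - real (n - i)) * real i * ?T n i)"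
    by (simp only: reflect_Suc shift reflect)
  also have "\<dots> = real s * real n * expbin_sq s n - 2 * expbin_mix s n"
    unfolding expbin_sq_def expbin_mix_def sum_distrib_left sum.distrib[symmetric] sum_subtractf[symmetric]
    by (auto intro!: sum.cong simp: algebra_simps)
  finally show ?thesis .
qed

lemma expbin_sq_recurrence:
  "(real n + 2)^3 * expbin_sq s (n + 2) =
     (2 * real s + (4 * real s - 1) * (real n + 1) - 3 * (real n + 1)^2) * expbin_sq s (n + 1)
     + 2 * (2 * real s - real n) * expbin_sq s n"
proof -
  have "(real n + 2)^2 * expbin_sq s (n + 2) = (2 * real s - real n - 1) * expbin_sq s (n + 1) + 2 * expbin_mix s (n + 2)"
    using expbin_sq_Suc_eq[of "Suc n" s] by (simp add: add.commute add.left_commute)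
  moreover have "(real n + 2) * expbin_mix s (n + 2) = real s * (real n + 1) * expbin_sq s (n + 1) - 2 * expbin_mix s (n + 1)"
    using expbin_mix_Suc_eq[of "Suc n" s] by (simp add: add.commute add.left_commute)
  moreover have "(real n + 1)^2 * expbin_sq s (n + 1) = (2 * real s - real n) * expbin_sq s n + 2 * expbin_mix s (n + 1)"
    using expbin_sq_Suc_eq[of n s] by simp
  ultimately show ?thesis by algebra
qed

lemma expbin_sq_nonneg: "expbin_sq s n \<ge> 0"
  unfolding expbin_sq_def expbin_def by (intro sum_nonneg mult_nonneg_nonneg) auto

lemma expbin_sq_eq_0: "2 * s < n \<Longrightarrow> expbin_sq s n = 0"
  unfolding expbin_sq_def expbin_def by (intro sum.neutral) (auto simp: binomial_eq_0)

definition upper_gap :: "nat \<Rightarrow> nat \<Rightarrow> real" where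
  "upper_gap s n = 2 * (2 * real s - real n) * expbin_sq s n - (real n + 1)^2 * expbin_sq s (n + 1)"

definition lower_gap :: "nat \<Rightarrow> nat \<Rightarrow> real" where
  "lower_gap s n = ((real n)^2 + real n + 2 * real s) * expbin_sq s (n + 1) - 2 * (2 * real s - real n) * expbin_sq s n"

definition gap_coeff :: "nat \<Rightarrow> nat \<Rightarrow> real" where
  "gap_coeff s n = (2 * real n + 1) * (2 * real s - real n - 1) - (real n + 1)^2"

lemma upper_gap_Suc: "(real n + 2) * upper_gap s (n + 1) = lower_gap s n"
  using expbin_sq_recurrence[of n s] unfolding upper_gap_def lower_gap_def
  by (simp add: algebra_simps) algebra

text \<open>The sign of \<open>gap_coeff\<close> decides in which direction nonnegativity of the gaps propagates.\<close>

lemma lower_gap_Suc: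
  "(real n + 2)^3 * lower_gap s (n + 1) =
     ((real n + 2)^2 + 2 * real s - real n - 2) * upper_gap s n
     + gap_coeff s (n + 1) * (2 * real s - real n - 1) * expbin_sq s (n + 1)"
  using expbin_sq_recurrence[of n s] unfolding upper_gap_def lower_gap_def gap_coeff_def
  by (simp add: algebra_simps) algebra

lemma gap_coeff_neg_mono:
  assumes "s \<ge> 1" "gap_coeff s M < 0" "M \<le> M'"
  shows "gap_coeff s M' < 0"
proof -
  have expand: "gap_coeff s k = real k * (4 * real s - 5 - 3 * real k) + 2 * real s - 2" for k
    unfolding gap_coeff_def by (simp add: algebra_simps power2_eq_square)
  have "\<not> 3 * real M \<le> 4 * real s - 5"
  proof
    assume "3 * real M \<le> 4 * real s - 5"
    then have "real M * (4 * real s - 5 - 3 * real M) \<ge> 0" by simp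
    with assms(1,2) show False unfolding expand by simp
  qed
  then have "(real M' - real M) * (4 * real s - 5 - 3 * real M' - 3 * real M) \<le> 0"
    using assms(3) by (intro mult_nonneg_nonpos) auto
  moreover have "gap_coeff s M' - gap_coeff s M = (real M' - real M) * (4 * real s - 5 - 3 * real M' - 3 * real M)"
    unfolding expand by (simp add: algebra_simps)
  ultimately show ?thesis using assms(2) by simp
qed

lemma gaps_nonneg_upwards:
  assumes "s \<ge> 1" "n \<le> 2 * s" "\<And>M. 1 \<le> M \<Longrightarrow> M \<le> n \<Longrightarrow> gap_coeff s M \<ge> 0"
  shows "upper_gap s n \<ge> 0 \<and> lower_gap s n \<ge> 0"
  using assms(2,3)
proof (induction n)
  case 0
  have "upper_gap s 0 = 2 * real s" "lower_gap s 0 = 4 * real s * (real s - 1)"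
    by (simp_all add: upper_gap_def lower_gap_def expbin_sq_def expbin_def atMost_Suc algebra_simps)
  then show ?case using assms(1) by simp
next
  case (Suc n)
  then have IH: "upper_gap s n \<ge> 0" "lower_gap s n \<ge> 0" by auto
  have below: "2 * real s - real n - 1 \<ge> 0" using Suc.prems(1) by linarith
  have "(real n + 2)^2 \<ge> 2^2"
    by (rule power_mono) auto
  then have "((real n + 2)^2 + 2 * real s - real n - 2) * upper_gap s n \<ge> 0"
    using IH below by simp
  moreover have "gap_coeff s (n + 1) * (2 * real s - real n - 1) * expbin_sq s (n + 1) \<ge> 0"
    using Suc.prems(2)[of "Suc n"] below expbin_sq_nonneg by simp
  ultimately have "(real n + 2)^3 * lower_gap s (n + 1) \<ge> 0"
    unfolding lower_gap_Suc by linarith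
  moreover have "(real n + 2) * upper_gap s (n + 1) \<ge> 0"
    unfolding upper_gap_Suc using IH by simp
  ultimately show ?case by (simp add: zero_le_mult_iff)
qed

lemma gaps_nonneg_downwards:
  assumes "n \<le> 2 * s + 1" "\<And>M. n < M \<Longrightarrow> M \<le> 2 * s \<Longrightarrow> gap_coeff s M \<le> 0"
  shows "upper_gap s n \<ge> 0 \<and> lower_gap s n \<ge> 0"
proof (rule inc_induct[OF assms(1)])
  show "upper_gap s (2 * s + 1) \<ge> 0 \<and> lower_gap s (2 * s + 1) \<ge> 0"
    by (simp add: upper_gap_def lower_gap_def expbin_sq_eq_0)
next
  fix k
  assume step: "n \<le> k" "k < 2 * s + 1" "upper_gap s (Suc k) \<ge> 0 \<and> lower_gap s (Suc k) \<ge> 0"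
  have "gap_coeff s (k + 1) * (2 * real s - real k - 1) * expbin_sq s (k + 1) \<le> 0"
  proof (cases "k + 1 \<le> 2 * s")
    case True
    then have "gap_coeff s (k + 1) \<le> 0" "2 * real s - real k - 1 \<ge> 0"
      using assms(2) step(1) by auto
    then show ?thesis
      using expbin_sq_nonneg by (simp add: mult_nonpos_nonneg)
  qed (simp add: expbin_sq_eq_0)
  moreover have "(real k + 2)^3 * lower_gap s (k + 1) \<ge> 0"
    using step(3) by simp
  ultimately have "((real k + 2)^2 + 2 * real s - real k - 2) * upper_gap s k \<ge> 0"
    using lower_gap_Suc[of k s] by linarith
  moreover have "(real k + 2)^2 + 2 * real s - real k - 2 > 0"
  proof -
    have "(real k + 2)^2 \<ge> 4" using power_mono[of 2 "real k + 2" 2] by simp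
    then show ?thesis using step(2) by linarith
  qed
  moreover have "lower_gap s k \<ge> 0"
    unfolding upper_gap_Suc[symmetric] using step(3) by simp
  ultimately show "upper_gap s k \<ge> 0 \<and> lower_gap s k \<ge> 0"
    by (simp add: zero_le_mult_iff)
qed

lemma expbin_sq_ratio_bounds:
  assumes "s \<ge> 1"
  shows "2 * (2 * real s - real n) * expbin_sq s n \<le> ((real n)^2 + real n + 2 * real s) * expbin_sq s (n + 1)"
    and "(real n + 1)^2 * expbin_sq s (n + 1) \<le> 2 * (2 * real s - real n) * expbin_sq s n"
proof -
  have "upper_gap s n \<ge> 0 \<and> lower_gap s n \<ge> 0"
  proof (cases "n \<le> 2 * s")
    case False
    then show ?thesis by (simp add: upper_gap_def lower_gap_def expbin_sq_eq_0)
  next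
    case True
    show ?thesis
    proof (cases "\<forall>M. 1 \<le> M \<longrightarrow> M \<le> n \<longrightarrow> gap_coeff s M \<ge> 0")
      case True
      with \<open>n \<le> 2 * s\<close> show ?thesis by (intro gaps_nonneg_upwards[OF assms]) auto
    next
      case False
      then obtain M where "M \<le> n" "gap_coeff s M < 0" by auto
      then have "gap_coeff s M' \<le> 0" if "n < M'" for M'
        using gap_coeff_neg_mono[OF assms, of M M'] that by simp
      with \<open>n \<le> 2 * s\<close> show ?thesis by (intro gaps_nonneg_downwards) auto
    qed
  qed
  then show "2 * (2 * real s - real n) * expbin_sq s n \<le> ((real n)^2 + real n + 2 * real s) * expbin_sq s (n + 1)"
    and "(real n + 1)^2 * expbin_sq s (n + 1) \<le> 2 * (2 * real s - real n) * expbin_sq s n"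
    unfolding upper_gap_def lower_gap_def by simp_all
qed

lemma expbin_sq_le_Suc:
  assumes "s \<ge> 1" and "(real n)^2 + real n + 2 * real s \<le> 2 * (2 * real s - real n) * (x - real n)"
  shows "expbin_sq s n \<le> (x - real n) * expbin_sq s (Suc n)"
proof (cases "n \<le> 2 * s")
  case False
  then show ?thesis by (simp add: expbin_sq_eq_0)
next
  case True
  let ?Q = "(real n)^2 + real n + 2 * real s"
  have "?Q > 0" using assms(1) by (simp add: add_nonneg_pos)
  moreover have "2 * real s - real n \<ge> 0" using True by linarith
  ultimately have "x - real n > 0"
    using assms(2) by (smt (verit) mult_nonneg_nonpos)
  have "?Q * expbin_sq s n \<le> 2 * (2 * real s - real n) * (x - real n) * expbin_sq s n"
    by (rule mult_right_mono[OF assms(2) expbin_sq_nonneg])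
  also have "\<dots> = (x - real n) * (2 * (2 * real s - real n) * expbin_sq s n)"
    by simp
  also have "\<dots> \<le> (x - real n) * (?Q * expbin_sq s (Suc n))"
    using expbin_sq_ratio_bounds(1)[OF assms(1), of n] \<open>x - real n > 0\<close> by simp
  finally show ?thesis using \<open>?Q > 0\<close> by (simp add: mult.left_commute)
qed

lemma expbin_sq_Suc_le:
  assumes "s \<ge> 1"
    and "real n < x \<Longrightarrow> 2 * (2 * real s - real n) * (x - real n) \<le> (real n + 1)^2"
  shows "(x - real n) * expbin_sq s (Suc n) \<le> expbin_sq s n"
proof (cases "real n < x")
  case False
  then have "(x - real n) * expbin_sq s (Suc n) \<le> 0"
    by (intro mult_nonpos_nonneg) (auto simp: expbin_sq_nonneg)
  then show ?thesis using expbin_sq_nonneg[of s n] by linarith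
next
  case True
  show ?thesis
  proof (cases "n < 2 * s")
    case False
    then show ?thesis by (simp add: expbin_sq_eq_0 expbin_sq_nonneg)
  next
    case small: True
    have "x - real n > 0" using True by simp
    have "(real n + 1)^2 * ((x - real n) * expbin_sq s (Suc n))
        \<le> (x - real n) * (2 * (2 * real s - real n) * expbin_sq s n)"
      using expbin_sq_ratio_bounds(2)[OF assms(1), of n] \<open>x - real n > 0\<close>
      by (simp add: mult.left_commute)
    also have "\<dots> = 2 * (2 * real s - real n) * (x - real n) * expbin_sq s n"
      by simp
    also have "\<dots> \<le> (real n + 1)^2 * expbin_sq s n"
      by (rule mult_right_mono[OF assms(2)[OF True] expbin_sq_nonneg])
    finally show ?thesis by (simp add: mult_le_cancel_left_pos)
  qed
qed

lemma f12_nonneg: "f12 s1 s2 N \<ge> 0"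
  unfolding f12_def ibinom_def by (intro mult_nonneg_nonneg sum_nonneg) auto

lemma f12_of_nat:
  "real_of_int (f12 (int s) (int m) (int n)) = real (m choose n) * fact n * expbin_sq s n"
proof -
  have ibinom_of_nat: "ibinom (int a) (int b) = int (a choose b)" for a b
    unfolding ibinom_def by (auto simp: binomial_eq_0)
  let ?t = "\<lambda>k. ibinom (int s) (int k) * ibinom (int s) (int n - int k) * ibinom (int n) (int k)"
  have vanish: "?t k = 0" if "s < k \<or> n < k" for k
    using that unfolding ibinom_def by (auto simp: binomial_eq_0)
  have term_eq: "real_of_int (?t k) = fact n * (expbin s k * expbin s (n - k))" if "k \<le> n" for k
    using that by (simp add: ibinom_of_nat of_nat_diff binomial_fact expbin_def flip: of_nat_diff)
  have "(\<Sum>i\<in>{0..int s}. ibinom (int s) i * ibinom (int s) (int n - i) * ibinom (int n) i)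
      = (\<Sum>k\<le>s. ?t k)"
    by (simp add: image_int_atLeastAtMost[symmetric, of 0, simplified] sum.reindex atLeast0AtMost)
  also have "\<dots> = (\<Sum>k\<le>min s n. ?t k)"
    by (intro sum.mono_neutral_right ballI vanish) auto
  also have "\<dots> = (\<Sum>k\<le>n. ?t k)"
    by (intro sum.mono_neutral_left ballI vanish) auto
  also have "real_of_int \<dots> = (\<Sum>k\<le>n. fact n * (expbin s k * expbin s (n - k)))"
    unfolding of_int_sum by (intro sum.cong refl term_eq) simp
  finally have inner: "real_of_int (\<Sum>i\<in>{0..int s}. ibinom (int s) i * ibinom (int s) (int n - i) * ibinom (int n) i)
      = fact n * expbin_sq s n"
    by (simp add: expbin_sq_def sum_distrib_left)
  show ?thesis
    unfolding f12_def of_int_mult inner by (simp add: ibinom_of_nat)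
qed

definition peak_estimate :: "real \<Rightarrow> real \<Rightarrow> real" where
  "peak_estimate s m = 2 * s + m + 3/2 - sqrt (4 * s^2 + 4 * s + (m + 1/2)^2)"

lemma peak_estimate_nonneg:
  assumes "s \<ge> 0" "m \<ge> 0"
  shows "peak_estimate s m \<ge> 0"
proof -
  have "4 * s^2 + 4 * s + (m + 1/2)^2 \<le> (2 * s + m + 3/2)^2"
    using assms by (simp add: power2_eq_square algebra_simps)
  then have "sqrt (4 * s^2 + 4 * s + (m + 1/2)^2) \<le> 2 * s + m + 3/2"
    using assms by (intro real_le_lsqrt) auto
  then show ?thesis unfolding peak_estimate_def by simp
qed

lemma le_peak_estimate_imp:
  assumes "x + 1 \<le> peak_estimate s m"
  shows "x^2 + x + 2 * s \<le> 2 * (2 * s - x) * (m - x)"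
proof -
  have "sqrt (4 * s^2 + 4 * s + (m + 1/2)^2) \<le> 2 * s + m + 1/2 - x"
    using assms unfolding peak_estimate_def by simp
  then have "4 * s^2 + 4 * s + (m + 1/2)^2 \<le> (2 * s + m + 1/2 - x)^2"
    by (rule sqrt_le_D)
  then show ?thesis by (simp add: power2_eq_square algebra_simps)
qed

lemma peak_estimate_less_imp:
  assumes "s \<ge> 0" "peak_estimate s m < x" "x < m"
  shows "2 * (2 * s - x) * (m - x) < x^2"
proof -
  have "2 * s + m + 3/2 - x < sqrt (4 * s^2 + 4 * s + (m + 1/2)^2)"
    using assms(2) unfolding peak_estimate_def by simp
  moreover have "2 * s + m + 3/2 - x \<ge> 0"
    using assms(1,3) by simp
  ultimately have "(2 * s + m + 3/2 - x)^2 < 4 * s^2 + 4 * s + (m + 1/2)^2"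
    using real_le_lsqrt by (meson not_le)
  then have key: "2 * (2 * s - x) * (m - x) + (2 * s - x) + 2 * (m - x) + 2 < x^2"
    by (simp add: power2_eq_square algebra_simps)
  show ?thesis
  proof (cases "2 * s - x \<ge> 0")
    case True
    with key assms(3) show ?thesis by smt
  next
    case False
    with assms(3) have "2 * (2 * s - x) * (m - x) < 0" by (simp add: mult_neg_pos)
    then show ?thesis by (smt (verit) zero_le_power2)
  qed
qed

lemma f12_step_up:
  assumes "s1 \<ge> 1" "s2 \<ge> 0" "real_of_int N + 1 \<le> peak_estimate (real_of_int s1) (real_of_int s2)"
  shows "f12 s1 s2 N \<le> f12 s1 s2 (N + 1)"
proof (cases "N < 0")
  case True
  then have "f12 s1 s2 N = 0" by (simp add: f12_def ibinom_def)
  then show ?thesis using f12_nonneg[of s1 s2 "N + 1"] by simp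
next
  case False
  then obtain s m n where s1: "s1 = int s" and s2: "s2 = int m" and N: "N = int n"
    using assms(1,2) zero_le_imp_eq_int[of s1] zero_le_imp_eq_int[of s2] zero_le_imp_eq_int[of N]
    by force
  then have "s \<ge> 1" using assms(1) by simp
  have N1: "N + 1 = int (Suc n)" using N by simp
  have "real_of_int (f12 s1 s2 N) = real (m choose n) * fact n * expbin_sq s n"
    unfolding s1 s2 N by (rule f12_of_nat)
  also have "\<dots> \<le> real (m choose n) * fact n * ((real m - real n) * expbin_sq s (Suc n))"
    using assms(3) le_peak_estimate_imp[of "real n" "real s" "real m"] unfolding s1 s2 N
    by (intro mult_left_mono expbin_sq_le_Suc \<open>s \<ge> 1\<close>) auto
  also have "\<dots> = real_of_int (f12 s1 s2 (N + 1))"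
    unfolding s1 s2 N1 f12_of_nat choose_Suc_mult_fact by (simp only: mult_ac)
  finally show ?thesis by simp
qed

lemma f12_step_down:
  assumes "s1 \<ge> 1" "s2 \<ge> 0" "peak_estimate (real_of_int s1) (real_of_int s2) < real_of_int N"
  shows "f12 s1 s2 (N + 1) \<le> f12 s1 s2 N"
proof -
  have "0 < real_of_int N"
    using peak_estimate_nonneg[of "real_of_int s1" "real_of_int s2"] assms by simp
  then obtain s m n where s1: "s1 = int s" and s2: "s2 = int m" and N: "N = int n"
    using assms(1,2) zero_le_imp_eq_int[of s1] zero_le_imp_eq_int[of s2] zero_le_imp_eq_int[of N]
    by force
  then have "s \<ge> 1" using assms(1) by simp
  have N1: "N + 1 = int (Suc n)" using N by simp
  have bound: "2 * (2 * real s - real n) * (real m - real n) \<le> (real n + 1)^2" if "real n < real m"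
  proof -
    have "2 * (2 * real s - real n) * (real m - real n) < (real n)^2"
      using peak_estimate_less_imp[of "real s" "real m" "real n"] assms(3) that unfolding s1 s2 N by simp
    also have "\<dots> \<le> (real n + 1)^2" by (simp add: power_mono)
    finally show ?thesis by simp
  qed
  have "real_of_int (f12 s1 s2 (N + 1)) = real (m choose n) * fact n * ((real m - real n) * expbin_sq s (Suc n))"
    unfolding s1 s2 N1 f12_of_nat choose_Suc_mult_fact by (simp only: mult_ac)
  also have "\<dots> \<le> real (m choose n) * fact n * expbin_sq s n"
    using bound by (intro mult_left_mono expbin_sq_Suc_le \<open>s \<ge> 1\<close>) auto
  also have "\<dots> = real_of_int (f12 s1 s2 N)"
    unfolding s1 s2 N by (rule f12_of_nat[symmetric])
  finally show ?thesis by simp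
qed

theorem theorem1p1:
  fixes s1 s2 :: int
  assumes "s1 \<ge> 1" and "s2 \<ge> 0"
  shows "\<exists>g::int.
     (\<forall>N M. N \<le> M \<and> M \<le> g \<longrightarrow> f12 s1 s2 N \<le> f12 s1 s2 M) \<and>
     (\<forall>N M. g \<le> N \<and> N \<le> M \<longrightarrow> f12 s1 s2 M \<le> f12 s1 s2 N) \<and>
     (\<exists>\<delta>::int. \<delta> \<in> {0, 1} \<and>
        g = \<lfloor>2 * real_of_int s1 + real_of_int s2 + 3/2
              - sqrt (4 * (real_of_int s1)^2 + 4 * real_of_int s1 + (real_of_int s2 + 1/2)^2)\<rfloor> + \<delta>)"
proof -
  let ?F = "\<lfloor>peak_estimate (real_of_int s1) (real_of_int s2)\<rfloor>"
  have "\<exists>g\<in>{?F, ?F + 1}. (\<forall>N M. N \<le> M \<and> M \<le> g \<longrightarrow> f12 s1 s2 N \<le> f12 s1 s2 M) \<and>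
           (\<forall>N M. g \<le> N \<and> N \<le> M \<longrightarrow> f12 s1 s2 M \<le> f12 s1 s2 N)"
  proof (rule unimodal_of_steps)
    fix N
    assume "N + 1 \<le> ?F"
    then show "f12 s1 s2 N \<le> f12 s1 s2 (N + 1)"
      by (intro f12_step_up assms) (simp add: le_floor_iff)
  next
    fix N
    assume "?F + 1 \<le> N"
    then have "?F < N" by simp
    then show "f12 s1 s2 (N + 1) \<le> f12 s1 s2 N"
      by (intro f12_step_down assms) (simp add: floor_less_iff)
  qed
  then obtain g where "g \<in> {?F, ?F + 1}"
    and "\<forall>N M. N \<le> M \<and> M \<le> g \<longrightarrow> f12 s1 s2 N \<le> f12 s1 s2 M"
    and "\<forall>N M. g \<le> N \<and> N \<le> M \<longrightarrow> f12 s1 s2 M \<le> f12 s1 s2 N"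
    by blast
  moreover from \<open>g \<in> {?F, ?F + 1}\<close> have "\<exists>\<delta>::int. \<delta> \<in> {0, 1} \<and> g = ?F + \<delta>"
    by auto
  ultimately show ?thesis
    unfolding peak_estimate_def by blast
qed

end
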